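(* Let $r\ge 1$, let $q_1,\ldots,q_r$ be positive even integers with $\max_i q_i>2$, and let $G=\Theta_{1,q_1,\ldots,q_r}$. If $p\ge\max\{3,\Delta(G)\}$, then $G$ is strongly $p$-edge-orientable.
   Context: For positive integers $p_1,\ldots,p_k$, the $\Theta$-graph $\Theta_{p_1,\ldots,p_k}$ is the graph obtained from two vertices $x_1,x_2$ joined by $k$ internally disjoint paths, the $i$th path having $p_i$ edges. A path with $1$ edge is the edge $x_1x_2$. An orientation of a graph $H$ is any digraph obtained by replacing each edge $uv$ with the arc $(u,v)$, with the arc $(v,u)$, or with both arcs. A kernel of a digraph $D$ is an independent set $S$ such that every vertex of $D-S$ has an out-neighbor in $S$. $D$ is kernel-perfect if every induced subdigraph of $D$ has a kernel. For $f:V(H)\to\mathbb{N}$, an orientation $D$ of $H$ is $f$-kernel-perfect if it is kernel-perfect and $f(v)\ge 1+d^+_D(v)$ for all $v$. For $f:E(G)\to\mathbb{N}$, $G$ is $f$-edge-orientable if its line graph $L(G)$ admits an $f$-kernel-perfect orientation. For $v\in V(G)$, define $f_{k,v}:E(G)\to\mathbb{N}$ by $f_{k,v}(e)=d_G(v)$ if $e$ is incident to $v$, and $f_{k,v}(e)=k$ otherwise. $G$ is strongly $k$-edge-orientable if $G$ is $f_{k,v}$-edge-orientable for every $v\in V(G)$. *)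

theory Defs
  imports Main
begin

text \<open>Simple graphs are given by a vertex set V and an edge set E of 2-element subsets of V.
  Digraphs are given by a vertex set W and an arc set A \<subseteq> W \<times> W.\<close>

definition degree :: "'a set set \<Rightarrow> 'a \<Rightarrow> nat" where
  "degree E v = card {e \<in> E. v \<in> e}"

definition max_degree :: "'a set \<Rightarrow> 'a set set \<Rightarrow> nat" where
  "max_degree V E = Max (degree E ` V)"

definition line_graph_edges :: "'a set set \<Rightarrow> 'a set set set" where
  "line_graph_edges E = {{e, e'} | e e'. e \<in> E \<and> e' \<in> E \<and> e \<noteq> e' \<and> e \<inter> e' \<noteq> {}}"

definition is_orientation :: "'b set \<Rightarrow> 'b set set \<Rightarrow> ('b \<times> 'b) set \<Rightarrow> bool" where
  "is_orientation VH EH A \<longleftrightarrow>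
     (\<forall>(u, v) \<in> A. u \<in> VH \<and> v \<in> VH \<and> {u, v} \<in> EH) \<and>
     (\<forall>u v. {u, v} \<in> EH \<and> u \<noteq> v \<longrightarrow> (u, v) \<in> A \<or> (v, u) \<in> A)"

definition out_degree :: "('b \<times> 'b) set \<Rightarrow> 'b \<Rightarrow> nat" where
  "out_degree A v = card {u. (v, u) \<in> A}"

definition is_kernel :: "'b set \<Rightarrow> ('b \<times> 'b) set \<Rightarrow> 'b set \<Rightarrow> bool" where
  "is_kernel W A S \<longleftrightarrow> S \<subseteq> W \<and> (\<forall>u \<in> S. \<forall>v \<in> S. (u, v) \<notin> A) \<and>
     (\<forall>v \<in> W - S. \<exists>u \<in> S. (v, u) \<in> A)"

definition kernel_perfect :: "'b set \<Rightarrow> ('b \<times> 'b) set \<Rightarrow> bool" where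
  "kernel_perfect V A \<longleftrightarrow> (\<forall>W \<subseteq> V. \<exists>S. is_kernel W A S)"

definition f_kernel_perfect :: "'b set \<Rightarrow> ('b \<times> 'b) set \<Rightarrow> ('b \<Rightarrow> nat) \<Rightarrow> bool" where
  "f_kernel_perfect V A f \<longleftrightarrow> kernel_perfect V A \<and> (\<forall>v \<in> V. f v \<ge> 1 + out_degree A v)"

definition f_edge_orientable :: "'a set set \<Rightarrow> ('a set \<Rightarrow> nat) \<Rightarrow> bool" where
  "f_edge_orientable E f \<longleftrightarrow>
     (\<exists>A. is_orientation E (line_graph_edges E) A \<and> f_kernel_perfect E A f)"

definition f_kv :: "'a set set \<Rightarrow> nat \<Rightarrow> 'a \<Rightarrow> 'a set \<Rightarrow> nat" where
  "f_kv E k v e = (if v \<in> e then degree E v else k)"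

definition strongly_edge_orientable :: "'a set \<Rightarrow> 'a set set \<Rightarrow> nat \<Rightarrow> bool" where
  "strongly_edge_orientable V E k \<longleftrightarrow> (\<forall>v \<in> V. f_edge_orientable E (f_kv E k v))"

text \<open>Theta graph Theta_{1,q_1,...,q_r} with qs = [q_1,...,q_r]:
  x1 = (0,0), x2 = (0,1); internal vertices of the i-th path (0-based i) are (Suc i, j), 0<j<q_i.\<close>
definition theta_pv :: "nat list \<Rightarrow> nat \<Rightarrow> nat \<Rightarrow> nat \<times> nat" where
  "theta_pv qs i j = (if j = 0 then (0, 0) else if j = qs ! i then (0, 1) else (Suc i, j))"

definition theta_V :: "nat list \<Rightarrow> (nat \<times> nat) set" where
  "theta_V qs = {(0, 0), (0, 1)} \<union> {(Suc i, j) | i j. i < length qs \<and> 0 < j \<and> j < qs ! i}"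

definition theta_E :: "nat list \<Rightarrow> (nat \<times> nat) set set" where
  "theta_E qs = {{(0, 0), (0, 1)}} \<union>
     {{theta_pv qs i j, theta_pv qs i (Suc j)} | i j. i < length qs \<and> j < qs ! i}"

end

theory Submission
  imports Defs "HOL-Library.Product_Lexorder"
begin

text \<open>An orientation of the line graph is obtained by ranking the edges of \<open>G\<close>: adjacent edges
  point towards the lower rank, and edges of equal rank along a prescribed relation. It is
  kernel-perfect as soon as every rank class is, because a kernel of the lowest class extends by
  a kernel of the edges it does not absorb; the rank classes used here are singletons or an even
  directed cycle, which is kernel-perfect.
  At a vertex \<open>v\<close> of degree 2 with edges \<open>a\<close> and \<open>b\<close>, \<open>a\<close> is made a sink and \<open>b\<close> points only
  to \<open>a\<close>; every other edge may have out-degree \<open>p - 1 \<ge> r\<close>, and only the \<open>r + 1\<close> neighbours of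
  an end edge of a path need care: they are ranked so that one of them lies above it, using a
  path with at least four edges. When \<open>v\<close> lies in the middle of a path and \<open>r \<ge> 2\<close>, this
  path together with another one forms an even cycle through \<open>v\<close>, which is oriented cyclically
  and ranked on top.\<close>

lemma is_kernel_self:
  assumes "\<forall>u\<in>U. \<forall>v\<in>U. (u, v) \<notin> A"
  shows "is_kernel U A U"
  using assms unfolding is_kernel_def by blast

lemma is_kernel_Un_closed:
  assumes closed: "\<And>u w. u \<in> L \<Longrightarrow> w \<in> W \<Longrightarrow> (u, w) \<in> A \<Longrightarrow> w \<in> L"
    and "L \<subseteq> W" and K: "is_kernel L A K"
    and K': "is_kernel {u \<in> W - L. \<forall>k\<in>K. (u, k) \<notin> A} A K'"
  shows "is_kernel W A (K \<union> K')"
proof -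
  have KL: "K \<subseteq> L" and K'W: "K' \<subseteq> W - L" using K K' by (auto simp: is_kernel_def)
  have "(u, v) \<notin> A" if "u \<in> K \<union> K'" "v \<in> K \<union> K'" for u v
  proof
    assume uv: "(u, v) \<in> A"
    show False
    proof (cases "u \<in> K")
      case True
      then have "v \<in> K" using closed[of u v] uv that(2) KL K'W \<open>L \<subseteq> W\<close> by auto
      then show False using K True uv by (auto simp: is_kernel_def)
    next
      case False
      then have "u \<in> K'" using that(1) by simp
      then show False using K K' uv that(2) by (auto simp: is_kernel_def)
    qed
  qed
  moreover have "\<exists>u \<in> K \<union> K'. (v, u) \<in> A" if "v \<in> W - (K \<union> K')" for v
  proof (cases "v \<in> L \<or> (\<exists>k\<in>K. (v, k) \<in> A)")
    case True
    then show ?thesis using K that by (auto simp: is_kernel_def)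
  next
    case False
    then show ?thesis using K' that by (auto simp: is_kernel_def)
  qed
  ultimately show ?thesis using KL K'W \<open>L \<subseteq> W\<close> unfolding is_kernel_def by blast
qed

text \<open>The lowest level \<open>L\<close> has no arcs leaving it, so a kernel of \<open>L\<close> combines with a kernel of
  the vertices outside \<open>L\<close> that it does not absorb.\<close>

lemma kernel_by_levels:
  fixes g :: "'a \<Rightarrow> 'k::linorder"
  assumes "finite W"
    and "\<And>u w. u \<in> W \<Longrightarrow> w \<in> W \<Longrightarrow> (u, w) \<in> A \<Longrightarrow> g w \<le> g u"
    and "\<And>U. U \<subseteq> W \<Longrightarrow> (\<And>u u'. u \<in> U \<Longrightarrow> u' \<in> U \<Longrightarrow> g u = g u') \<Longrightarrow> \<exists>S. is_kernel U A S"
  shows "\<exists>S. is_kernel W A S"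
  using assms
proof (induction "card W" arbitrary: W rule: less_induct)
  case less
  show ?case
  proof (cases "W = {}")
    case True
    then have "is_kernel W A {}" by (simp add: is_kernel_def)
    then show ?thesis ..
  next
    case False
    define m where "m = Min (g ` W)"
    define L where "L = {u \<in> W. g u = m}"
    have "m \<in> g ` W" unfolding m_def using False less.prems(1) by simp
    then have "L \<noteq> {}" unfolding L_def by auto
    have "L \<subseteq> W" unfolding L_def by auto
    have closed: "w \<in> L" if "u \<in> L" "w \<in> W" "(u, w) \<in> A" for u w
    proof -
      have "g w \<le> m" using that less.prems(2)[of u w] unfolding L_def by auto
      moreover have "m \<le> g w" unfolding m_def using less.prems(1) \<open>w \<in> W\<close> by simp
      ultimately show ?thesis using \<open>w \<in> W\<close> unfolding L_def by simp
    qed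
    have "\<exists>S. is_kernel L A S" by (rule less.prems(3)) (auto simp: L_def)
    then obtain K where K: "is_kernel L A K" ..
    define W' where "W' = {u \<in> W - L. \<forall>k\<in>K. (u, k) \<notin> A}"
    have "W' \<subset> W" using \<open>L \<noteq> {}\<close> \<open>L \<subseteq> W\<close> unfolding W'_def by auto
    have "card W' < card W" using less.prems(1) \<open>W' \<subset> W\<close> by (rule psubset_card_mono)
    moreover have "finite W'" using less.prems(1) \<open>W' \<subset> W\<close> by (meson finite_subset psubset_imp_subset)
    ultimately obtain K' where "is_kernel W' A K'"
    proof (rule less.hyps[elim_format])
      show "g w \<le> g u" if "u \<in> W'" "w \<in> W'" "(u, w) \<in> A" for u w
        using less.prems(2) that \<open>W' \<subset> W\<close> by blast
      show "\<exists>S. is_kernel U A S"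
        if "U \<subseteq> W'" "\<And>u u'. u \<in> U \<Longrightarrow> u' \<in> U \<Longrightarrow> g u = g u'" for U
        using less.prems(3)[of U] that \<open>W' \<subset> W\<close> by blast
    qed auto
    then have "is_kernel W A (K \<union> K')"
      using is_kernel_Un_closed[OF closed \<open>L \<subseteq> W\<close> K] unfolding W'_def by simp
    then show ?thesis ..
  qed
qed

lemma kernel_by_potential:
  fixes g :: "'a \<Rightarrow> 'k::linorder"
  assumes "finite W" and decr: "\<And>u w. u \<in> W \<Longrightarrow> w \<in> W \<Longrightarrow> (u, w) \<in> A \<Longrightarrow> g w < g u"
  shows "\<exists>S. is_kernel W A S"
proof (rule kernel_by_levels[of W A g])
  fix U assume U: "U \<subseteq> W" and lev: "\<And>u u'. u \<in> U \<Longrightarrow> u' \<in> U \<Longrightarrow> g u = g u'"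
  have "(u, v) \<notin> A" if "u \<in> U" "v \<in> U" for u v
    using decr[of u v] lev[of u v] that U by auto
  then have "is_kernel U A U" by (simp add: is_kernel_self)
  then show "\<exists>S. is_kernel U A S" ..
qed (use assms in \<open>simp_all add: less_imp_le\<close>)

lemma even_cycle_kernel_full:
  assumes "even n" and inj: "inj_on c {..<n}"
    and arcs: "\<And>i j. i < n \<Longrightarrow> j < n \<Longrightarrow> (c i, c j) \<in> A \<longleftrightarrow> j = Suc i mod n"
  shows "is_kernel (c ` {..<n}) A (c ` {i. i < n \<and> even i})"
  unfolding is_kernel_def
proof (intro conjI ballI)
  fix u v assume "u \<in> c ` {i. i < n \<and> even i}" "v \<in> c ` {i. i < n \<and> even i}"
  then obtain i j where ij: "i < n" "even i" "j < n" "even j" "u = c i" "v = c j" by auto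
  have "j \<noteq> Suc i mod n"
  proof (cases "Suc i < n")
    case False
    then have "Suc i = n" using ij by simp
    then show ?thesis using ij \<open>even n\<close> by (metis even_Suc)
  qed (use ij in \<open>auto simp: even_Suc\<close>)
  then show "(u, v) \<notin> A" using arcs ij by simp
next
  fix v assume "v \<in> c ` {..<n} - c ` {i. i < n \<and> even i}"
  then obtain i where i: "i < n" "odd i" "v = c i" by auto
  have "Suc i mod n < n" "even (Suc i mod n)"
    using i \<open>even n\<close> by (auto simp: mod_Suc)
  then show "\<exists>u\<in>c ` {i. i < n \<and> even i}. (v, u) \<in> A" using arcs i by blast
qed auto

lemma even_cycle_kernel:
  assumes "even n" and inj: "inj_on c {..<n}"
    and arcs: "\<And>i j. i < n \<Longrightarrow> j < n \<Longrightarrow> (c i, c j) \<in> A \<longleftrightarrow> j = Suc i mod n"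
    and U: "U \<subseteq> c ` {..<n}"
  shows "\<exists>S. is_kernel U A S"
proof (cases "U = c ` {..<n}")
  case True
  then show ?thesis using even_cycle_kernel_full[OF assms(1-3)] by blast
next
  case False
  then obtain m where m: "m < n" "c m \<notin> U" using U by auto
  define pos where "pos = inv_into {..<n} c"
  have pos: "pos (c i) = i" if "i < n" for i unfolding pos_def using inj that by simp
  \<comment> \<open>the number of steps along the cycle from \<open>u\<close> to the missing vertex \<open>c m\<close>\<close>
  define g where "g u = (if pos u \<le> m then m - pos u else m + n - pos u)" for u
  show ?thesis
  proof (rule kernel_by_potential[of U A g])
    show "finite U" using U finite_surj by blast
  next
    fix u w assume uw: "u \<in> U" "w \<in> U" "(u, w) \<in> A"
    obtain i j where ij: "i < n" "j < n" "u = c i" "w = c j" using U uw(1,2) by blast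
    then have "i \<noteq> m" "j \<noteq> m" "j = Suc i mod n" using uw m(2) arcs by auto
    moreover have "Suc i mod n = (if Suc i = n then 0 else Suc i)" using ij(1) by simp
    ultimately show "g w < g u" unfolding g_def using pos ij m(1) by auto
  qed
qed

lemma is_kernel_image:
  assumes inj: "inj_on h V" and "A \<subseteq> V \<times> V" and "W \<subseteq> V" and K: "is_kernel W A S"
  shows "is_kernel (h ` W) ((\<lambda>(x, y). (h x, h y)) ` A) (h ` S)"
proof -
  have arc_iff: "(h x, h y) \<in> (\<lambda>(x, y). (h x, h y)) ` A \<longleftrightarrow> (x, y) \<in> A" if "x \<in> V" "y \<in> V" for x y
  proof
    assume "(h x, h y) \<in> (\<lambda>(x, y). (h x, h y)) ` A"
    then obtain a b where "(a, b) \<in> A" "h a = h x" "h b = h y" by auto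
    moreover have "a \<in> V" "b \<in> V" using \<open>(a, b) \<in> A\<close> assms(2) by auto
    ultimately show "(x, y) \<in> A" using inj that by (metis inj_on_eq_iff)
  qed auto
  have "S \<subseteq> W" using K by (simp add: is_kernel_def)
  show ?thesis unfolding is_kernel_def
  proof (intro conjI ballI)
    show "h ` S \<subseteq> h ` W" using \<open>S \<subseteq> W\<close> by auto
  next
    fix u v assume "u \<in> h ` S" "v \<in> h ` S"
    then obtain x y where "x \<in> S" "y \<in> S" "u = h x" "v = h y" by auto
    moreover have "(x, y) \<notin> A" using K \<open>x \<in> S\<close> \<open>y \<in> S\<close> by (simp add: is_kernel_def)
    moreover have "x \<in> V" "y \<in> V" using \<open>x \<in> S\<close> \<open>y \<in> S\<close> \<open>S \<subseteq> W\<close> \<open>W \<subseteq> V\<close> by auto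
    ultimately show "(u, v) \<notin> (\<lambda>(x, y). (h x, h y)) ` A" using arc_iff by simp
  next
    fix v assume "v \<in> h ` W - h ` S"
    then obtain x where "x \<in> W - S" "v = h x" by auto
    then obtain y where "y \<in> S" "(x, y) \<in> A" using K unfolding is_kernel_def by blast
    then show "\<exists>u\<in>h ` S. (v, u) \<in> (\<lambda>(x, y). (h x, h y)) ` A" using \<open>v = h x\<close> by force
  qed
qed

type_synonym label = "nat \<times> nat"

locale theta_graph =
  fixes qs :: "nat list"
  assumes qs_nonempty: "qs \<noteq> []" and qs_even: "\<forall>q\<in>set qs. q > 0 \<and> even q"
begin

abbreviation "r \<equiv> length qs"
abbreviation "pv \<equiv> theta_pv qs"

lemma r_pos: "0 < r"
  using qs_nonempty by simp

lemma path_length_ge_2: "i < r \<Longrightarrow> 2 \<le> qs ! i"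
  using qs_even nth_mem[of i qs] by (metis One_nat_def Suc_leI dvd_imp_le less_2_cases_iff nat_less_le odd_one)

lemma even_path_length: "i < r \<Longrightarrow> even (qs ! i)"
  using qs_even nth_mem[of i qs] by blast

lemma pv_inner: "0 < j \<Longrightarrow> j < qs ! i \<Longrightarrow> pv i j = (Suc i, j)"
  by (simp add: theta_pv_def)

text \<open>Edges are labelled by \<open>(0, 0)\<close> for the edge \<open>x\<^sub>1x\<^sub>2\<close> and by \<open>(Suc i, j)\<close> for
  the \<open>j\<close>-th edge of the \<open>i\<close>-th path, which joins \<open>pv i j\<close> and \<open>pv i (Suc j)\<close>.\<close>

definition labels :: "label set" where
  "labels = insert (0, 0) {(Suc i, j) | i j. i < r \<and> j < qs ! i}"

definition edge_of :: "label \<Rightarrow> (nat \<times> nat) set" where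
  "edge_of l = (if fst l = 0 then {(0, 0), (0, 1)}
     else {pv (fst l - 1) (snd l), pv (fst l - 1) (Suc (snd l))})"

lemma edge_of_0 [simp]: "edge_of (0, j) = {(0, 0), (0, 1)}"
  by (simp add: edge_of_def)

lemma edge_of_Suc [simp]: "edge_of (Suc i, j) = {pv i j, pv i (Suc j)}"
  by (simp add: edge_of_def)

lemma Suc_in_labels [simp]: "(Suc i, j) \<in> labels \<longleftrightarrow> i < r \<and> j < qs ! i"
  by (auto simp: labels_def)

lemma zero_in_labels [simp]: "(0, j) \<in> labels \<longleftrightarrow> j = 0"
  by (auto simp: labels_def)

lemma labelsE:
  assumes "l \<in> labels"
  obtains "l = (0, 0)" | i j where "l = (Suc i, j)" "i < r" "j < qs ! i"
  using assms unfolding labels_def by auto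

lemma theta_E_eq: "theta_E qs = edge_of ` labels"
proof -
  have "{{pv i j, pv i (Suc j)} | i j. i < r \<and> j < qs ! i} = edge_of ` {(Suc i, j) | i j. i < r \<and> j < qs ! i}"
    by force
  then show ?thesis unfolding theta_E_def labels_def by auto
qed

lemma finite_labels: "finite labels"
proof -
  have "j \<le> Max (set qs)" if "i < r" "j < qs ! i" for i j
    using that Max_ge[of "set qs" "qs ! i"] by (meson finite_set le_trans less_imp_le nth_mem)
  then have "labels \<subseteq> {..r} \<times> {..Max (set qs)}"
    unfolding labels_def by auto
  then show ?thesis using finite_subset by blast
qed

definition incident :: "nat \<times> nat \<Rightarrow> label set" where
  "incident z = {l \<in> labels. z \<in> edge_of l}"

lemma finite_incident: "finite (incident z)"
  using finite_labels unfolding incident_def by auto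

lemma incident_inner:
  assumes "i < r" "0 < j" "j < qs ! i"
  shows "incident (Suc i, j) = {(Suc i, j - 1), (Suc i, j)}"
proof -
  have "l \<in> incident (Suc i, j) \<longleftrightarrow> l = (Suc i, j - 1) \<or> l = (Suc i, j)" for l
    using assms path_length_ge_2[of i] path_length_ge_2[of "fst l - 1"]
    by (cases l; cases "fst l") (auto simp: incident_def theta_pv_def split: if_splits)
  then show ?thesis by blast
qed

lemma inj_on_edge_of: "inj_on edge_of labels"
proof (rule inj_onI)
  fix l l' assume "l \<in> labels" "l' \<in> labels" "edge_of l = edge_of l'"
  then show "l = l'"
    by (elim labelsE) (auto simp: theta_pv_def doubleton_eq_iff split: if_splits dest: path_length_ge_2)
qed

lemma degree_theta_E: "degree (theta_E qs) z = card (incident z)"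
proof -
  have "{e \<in> theta_E qs. z \<in> e} = edge_of ` incident z"
    unfolding theta_E_eq incident_def by auto
  moreover have "inj_on edge_of (incident z)"
    using inj_on_edge_of by (rule inj_on_subset) (auto simp: incident_def)
  ultimately show ?thesis unfolding degree_def by (simp add: card_image)
qed

lemma f_kv_edge_of:
  "l \<in> labels \<Longrightarrow> f_kv (theta_E qs) p v (edge_of l) = (if l \<in> incident v then card (incident v) else p)"
  unfolding f_kv_def incident_def degree_theta_E by simp

definition pole :: "bool \<Rightarrow> nat \<times> nat" where
  "pole sd = (if sd then (0, 0) else (0, 1))"

definition end_pos :: "bool \<Rightarrow> nat \<Rightarrow> nat" where
  "end_pos sd i = (if sd then 0 else qs ! i - 1)"

definition next_pos :: "bool \<Rightarrow> nat \<Rightarrow> nat" where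
  "next_pos sd i = (if sd then 1 else qs ! i - 2)"

lemma end_pos_less: "i < r \<Longrightarrow> end_pos sd i < qs ! i"
  using path_length_ge_2[of i] by (auto simp: end_pos_def)

lemma next_pos_less: "i < r \<Longrightarrow> next_pos sd i < qs ! i"
  using path_length_ge_2[of i] by (auto simp: next_pos_def)

lemma next_pos_neq_end_pos: "i < r \<Longrightarrow> next_pos sd i \<noteq> end_pos sd i"
  using path_length_ge_2[of i] by (auto simp: next_pos_def end_pos_def)

lemma end_pos_neq: "i < r \<Longrightarrow> end_pos sd i \<noteq> end_pos (\<not> sd) i"
  using path_length_ge_2[of i] by (auto simp: end_pos_def)

lemma incident_pole: "incident (pole sd) = insert (0, 0) ((\<lambda>i. (Suc i, end_pos sd i)) ` {..<r})"
proof -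
  have "l \<in> incident (pole sd) \<longleftrightarrow> l = (0, 0) \<or> (\<exists>i<r. l = (Suc i, end_pos sd i))" for l
    using path_length_ge_2[of "fst l - 1"]
    by (cases l; cases "fst l"; cases sd)
      (auto simp: incident_def theta_pv_def pole_def end_pos_def split: if_splits)
  then show ?thesis by blast
qed

lemma card_incident_pole: "card (incident (pole sd)) = r + 1"
  unfolding incident_pole by (subst card_insert_disjoint) (auto simp: card_image inj_on_def)

lemma end_label_incident_pole: "i < r \<Longrightarrow> (Suc i, end_pos sd i) \<in> incident (pole sd)"
  unfolding incident_pole by blast

lemma edges_at_end_label:
  assumes "i < r"
  shows "(\<Union>z\<in>edge_of (Suc i, end_pos sd i). incident z)
    = incident (pole sd) \<union> {(Suc i, end_pos sd i), (Suc i, next_pos sd i)}"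
proof -
  have "edge_of (Suc i, end_pos sd i) = {pole sd, (Suc i, if sd then 1 else qs ! i - 1)}"
    using assms path_length_ge_2[of i] by (auto simp: end_pos_def pole_def theta_pv_def)
  moreover have "incident (Suc i, if sd then 1 else qs ! i - 1) = {(Suc i, end_pos sd i), (Suc i, next_pos sd i)}"
  proof (cases sd)
    case True
    then show ?thesis using assms path_length_ge_2[of i] incident_inner[of i 1]
      by (simp add: end_pos_def next_pos_def)
  next
    case False
    have "qs ! i - 1 - 1 = qs ! i - 2" by simp
    then show ?thesis using False assms path_length_ge_2[of i] incident_inner[of i "qs ! i - 1"]
      by (simp add: end_pos_def next_pos_def insert_commute)
  qed
  ultimately show ?thesis by (simp only: UN_insert UN_empty Un_empty_right)
qed

lemma theta_V_cases:
  assumes "v \<in> theta_V qs"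
  obtains sd where "v = pole sd" | i j where "v = (Suc i, j)" "i < r" "0 < j" "j < qs ! i"
proof -
  have "v = pole True \<or> v = pole False \<or> (\<exists>i j. v = (Suc i, j) \<and> i < r \<and> 0 < j \<and> j < qs ! i)"
    using assms unfolding theta_V_def pole_def by auto
  then show thesis using that by blast
qed

lemma finite_theta_V: "finite (theta_V qs)"
proof -
  have "theta_V qs \<subseteq> insert (0, 1) labels"
    unfolding theta_V_def by auto
  then show ?thesis using finite_labels finite_subset by blast
qed

definition arc :: "(label \<Rightarrow> 'k::linorder) \<Rightarrow> (label \<Rightarrow> label \<Rightarrow> bool)
    \<Rightarrow> label \<Rightarrow> label \<Rightarrow> bool" where
  "arc key tie l l' \<longleftrightarrow> l \<in> labels \<and> l' \<in> labels \<and> l \<noteq> l' \<and> edge_of l \<inter> edge_of l' \<noteq> {} \<and>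
     (key l' < key l \<or> key l' = key l \<and> tie l l')"

definition label_arcs :: "(label \<Rightarrow> 'k::linorder) \<Rightarrow> (label \<Rightarrow> label \<Rightarrow> bool)
    \<Rightarrow> (label \<times> label) set" where
  "label_arcs key tie = {(l, l'). arc key tie l l'}"

definition edge_arcs :: "(label \<Rightarrow> 'k::linorder) \<Rightarrow> (label \<Rightarrow> label \<Rightarrow> bool)
    \<Rightarrow> ((nat \<times> nat) set \<times> (nat \<times> nat) set) set" where
  "edge_arcs key tie = (\<lambda>(l, l'). (edge_of l, edge_of l')) ` label_arcs key tie"

definition out_labels :: "(label \<Rightarrow> 'k::linorder) \<Rightarrow> (label \<Rightarrow> label \<Rightarrow> bool)
    \<Rightarrow> label \<Rightarrow> label set" where
  "out_labels key tie l = {l'. arc key tie l l'}"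

abbreviation "no_tie \<equiv> \<lambda>_ _ :: label. False"

lemma arc_key_le: "arc key tie l h \<Longrightarrow> key h \<le> key l"
  unfolding arc_def by auto

lemma is_orientation_edge_arcs:
  assumes ties: "\<And>l l'. l \<in> labels \<Longrightarrow> l' \<in> labels \<Longrightarrow> l \<noteq> l' \<Longrightarrow> edge_of l \<inter> edge_of l' \<noteq> {}
      \<Longrightarrow> key l = key l' \<Longrightarrow> tie l l' \<or> tie l' l"
  shows "is_orientation (theta_E qs) (line_graph_edges (theta_E qs)) (edge_arcs key tie)"
  unfolding is_orientation_def
proof (intro conjI allI impI ballI)
  fix x assume "x \<in> edge_arcs key tie"
  then obtain l l' where x: "x = (edge_of l, edge_of l')" and "arc key tie l l'"
    unfolding edge_arcs_def label_arcs_def by auto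
  then have l: "l \<in> labels" "l' \<in> labels" "l \<noteq> l'" "edge_of l \<inter> edge_of l' \<noteq> {}"
    unfolding arc_def by auto
  then have "edge_of l \<noteq> edge_of l'" using inj_on_edge_of by (meson inj_on_eq_iff)
  then have "{edge_of l, edge_of l'} \<in> line_graph_edges (theta_E qs)"
    unfolding line_graph_edges_def theta_E_eq using l by blast
  then show "case x of (u, v) \<Rightarrow> u \<in> theta_E qs \<and> v \<in> theta_E qs \<and> {u, v} \<in> line_graph_edges (theta_E qs)"
    using x l unfolding theta_E_eq by simp
next
  fix u v assume "{u, v} \<in> line_graph_edges (theta_E qs) \<and> u \<noteq> v"
  then have "u \<in> theta_E qs" "v \<in> theta_E qs" "u \<inter> v \<noteq> {}" "u \<noteq> v"
    unfolding line_graph_edges_def by (auto simp: doubleton_eq_iff)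
  moreover obtain l l' where "l \<in> labels" "l' \<in> labels" "u = edge_of l" "v = edge_of l'"
    using \<open>u \<in> theta_E qs\<close> \<open>v \<in> theta_E qs\<close> unfolding theta_E_eq by auto
  ultimately have l: "l \<in> labels" "l' \<in> labels" "u = edge_of l" "v = edge_of l'" "l \<noteq> l'"
      "edge_of l \<inter> edge_of l' \<noteq> {}"
    by auto
  have "arc key tie l l' \<or> arc key tie l' l"
    using ties[OF l(1,2,5,6)] l unfolding arc_def by (auto simp: Int_commute)
  then show "(u, v) \<in> edge_arcs key tie \<or> (v, u) \<in> edge_arcs key tie"
    unfolding edge_arcs_def label_arcs_def l(3,4) by (auto intro: rev_image_eqI)
qed

lemma kernel_perfect_edge_arcs:
  assumes levels: "\<And>U. U \<subseteq> labels \<Longrightarrow> (\<And>u u'. u \<in> U \<Longrightarrow> u' \<in> U \<Longrightarrow> key u = key u')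
      \<Longrightarrow> \<exists>S. is_kernel U (label_arcs key tie) S"
  shows "kernel_perfect (theta_E qs) (edge_arcs key tie)"
  unfolding kernel_perfect_def
proof (intro allI impI)
  fix W assume W: "W \<subseteq> theta_E qs"
  define WL where "WL = {l \<in> labels. edge_of l \<in> W}"
  have "W = edge_of ` WL" using W unfolding WL_def theta_E_eq by auto
  have "\<exists>S. is_kernel WL (label_arcs key tie) S"
  proof (rule kernel_by_levels[of WL _ key])
    show "finite WL" using finite_labels unfolding WL_def by auto
    show "key w \<le> key u" if "(u, w) \<in> label_arcs key tie" for u w
      using that unfolding label_arcs_def arc_def by auto
    show "\<exists>S. is_kernel U (label_arcs key tie) S"
      if "U \<subseteq> WL" "\<And>u u'. u \<in> U \<Longrightarrow> u' \<in> U \<Longrightarrow> key u = key u'" for U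
      using levels[of U] that unfolding WL_def by blast
  qed
  then obtain S where "is_kernel WL (label_arcs key tie) S" ..
  moreover have "label_arcs key tie \<subseteq> labels \<times> labels" unfolding label_arcs_def arc_def by auto
  moreover have "WL \<subseteq> labels" unfolding WL_def by auto
  ultimately have "is_kernel (edge_of ` WL) (edge_arcs key tie) (edge_of ` S)"
    unfolding edge_arcs_def using is_kernel_image[OF inj_on_edge_of] by blast
  then show "\<exists>S. is_kernel W (edge_arcs key tie) S" using \<open>W = edge_of ` WL\<close> by blast
qed

lemma out_labels_subset_labels: "out_labels key tie l \<subseteq> labels"
  unfolding out_labels_def arc_def by blast

lemma out_degree_edge_arcs:
  assumes "l \<in> labels"
  shows "out_degree (edge_arcs key tie) (edge_of l) = card (out_labels key tie l)"
proof -
  have "{e. (edge_of l, e) \<in> edge_arcs key tie} = edge_of ` out_labels key tie l"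
  proof (intro equalityI subsetI)
    fix e assume "e \<in> {e. (edge_of l, e) \<in> edge_arcs key tie}"
    then obtain a b where ab: "arc key tie a b" "edge_of a = edge_of l" "e = edge_of b"
      unfolding edge_arcs_def label_arcs_def by auto
    then have "a = l" using inj_on_edge_of assms unfolding arc_def by (meson inj_on_eq_iff)
    then show "e \<in> edge_of ` out_labels key tie l" using ab unfolding out_labels_def by auto
  qed (auto simp: out_labels_def edge_arcs_def label_arcs_def intro: rev_image_eqI)
  moreover have "inj_on edge_of (out_labels key tie l)"
    using inj_on_edge_of out_labels_subset_labels by (rule inj_on_subset)
  ultimately show ?thesis unfolding out_degree_def by (simp add: card_image)
qed

lemma f_edge_orientable_by_key:
  assumes ties: "\<And>l l'. l \<in> labels \<Longrightarrow> l' \<in> labels \<Longrightarrow> l \<noteq> l' \<Longrightarrow> edge_of l \<inter> edge_of l' \<noteq> {}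
      \<Longrightarrow> key l = key l' \<Longrightarrow> tie l l' \<or> tie l' l"
    and levels: "\<And>U. U \<subseteq> labels \<Longrightarrow> (\<And>u u'. u \<in> U \<Longrightarrow> u' \<in> U \<Longrightarrow> key u = key u')
      \<Longrightarrow> \<exists>S. is_kernel U (label_arcs key tie) S"
    and bound: "\<And>l. l \<in> labels \<Longrightarrow> 1 + card (out_labels key tie l) \<le> f (edge_of l)"
  shows "f_edge_orientable (theta_E qs) f"
  unfolding f_edge_orientable_def f_kernel_perfect_def
proof (intro exI conjI)
  show "is_orientation (theta_E qs) (line_graph_edges (theta_E qs)) (edge_arcs key tie)"
    using ties by (rule is_orientation_edge_arcs)
  show "kernel_perfect (theta_E qs) (edge_arcs key tie)"
    using levels by (rule kernel_perfect_edge_arcs)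
  show "\<forall>e\<in>theta_E qs. 1 + out_degree (edge_arcs key tie) e \<le> f e"
    using bound out_degree_edge_arcs[of _ key tie] unfolding theta_E_eq by auto
qed

lemma f_edge_orientable_by_injective_key:
  assumes "inj_on key labels"
    and bound: "\<And>l. l \<in> labels \<Longrightarrow> 1 + card (out_labels key no_tie l) \<le> f (edge_of l)"
  shows "f_edge_orientable (theta_E qs) f"
proof (rule f_edge_orientable_by_key[OF _ _ bound])
  fix U assume same: "\<And>u u'. u \<in> U \<Longrightarrow> u' \<in> U \<Longrightarrow> key u = key u'"
  have "(u, v) \<notin> label_arcs key no_tie" if "u \<in> U" "v \<in> U" for u v
    using same[OF that] unfolding label_arcs_def arc_def by auto
  then have "\<forall>u\<in>U. \<forall>v\<in>U. (u, v) \<notin> label_arcs key no_tie" by blast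
  then have "is_kernel U (label_arcs key no_tie) U" by (rule is_kernel_self)
  then show "\<exists>S. is_kernel U (label_arcs key no_tie) S" ..
qed (meson inj_onD assms(1))

lemma out_labels_subset_adjacent:
  assumes "l \<in> labels"
  shows "out_labels key tie l \<subseteq> (\<Union>z\<in>edge_of l. incident z) - {l}"
  using assms unfolding out_labels_def arc_def incident_def by blast

lemma card_out_labels_inner:
  assumes "i < r" "0 < j" "Suc j < qs ! i"
  shows "card (out_labels key tie (Suc i, j)) \<le> 2"
proof -
  have "(\<Union>z\<in>edge_of (Suc i, j). incident z) = {(Suc i, j - 1), (Suc i, j), (Suc i, Suc j)}"
    using assms incident_inner[of i j] incident_inner[of i "Suc j"] by (auto simp: pv_inner)
  then have "out_labels key tie (Suc i, j) \<subseteq> {(Suc i, j - 1), (Suc i, Suc j)}"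
    using out_labels_subset_adjacent[of "(Suc i, j)"] assms by auto
  then have "card (out_labels key tie (Suc i, j)) \<le> card {(Suc i, j - 1), (Suc i, Suc j)}"
    by (rule card_mono[rotated]) simp
  also have "\<dots> \<le> 2" by (simp add: card_insert_le_m1)
  finally show ?thesis .
qed

lemma out_labels_end:
  assumes "i < r"
  shows "out_labels key tie (Suc i, end_pos sd i)
    \<subseteq> (incident (pole sd) - {(Suc i, end_pos sd i)}) \<union> {(Suc i, next_pos sd i)}"
  using out_labels_subset_adjacent[of "(Suc i, end_pos sd i)" key tie] assms
  unfolding edges_at_end_label[OF assms] by (auto simp: end_pos_less)

lemma card_end_neighbourhood:
  assumes "i < r"
  shows "card ((incident (pole sd) - {(Suc i, end_pos sd i)}) \<union> {(Suc i, next_pos sd i)}) \<le> r + 1"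
proof -
  have "card ((incident (pole sd) - {(Suc i, end_pos sd i)}) \<union> {(Suc i, next_pos sd i)})
      \<le> card (incident (pole sd) - {(Suc i, end_pos sd i)}) + card {(Suc i, next_pos sd i)}"
    by (rule card_Un_le)
  also have "\<dots> = r + 1"
    using card_incident_pole end_label_incident_pole[OF assms] finite_incident by simp
  finally show ?thesis .
qed

lemma card_out_labels_end:
  assumes "i < r"
  shows "card (out_labels key tie (Suc i, end_pos sd i)) \<le> r + 1"
  using card_mono[OF _ out_labels_end[OF assms]] card_end_neighbourhood[OF assms] finite_incident
  by (meson finite.emptyI finite.insertI finite_Diff finite_UnI le_trans)

lemma card_out_labels_end_le_r:
  assumes "i < r"
    and h: "h \<in> (incident (pole sd) - {(Suc i, end_pos sd i)}) \<union> {(Suc i, next_pos sd i)}"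
    and not_arc: "\<not> arc key tie (Suc i, end_pos sd i) h"
  shows "card (out_labels key tie (Suc i, end_pos sd i)) \<le> r"
proof -
  let ?N = "(incident (pole sd) - {(Suc i, end_pos sd i)}) \<union> {(Suc i, next_pos sd i)}"
  have "out_labels key tie (Suc i, end_pos sd i) \<subseteq> ?N - {h}"
    using out_labels_end[OF assms(1)] not_arc unfolding out_labels_def by blast
  then have "card (out_labels key tie (Suc i, end_pos sd i)) \<le> card (?N - {h})"
    by (rule card_mono[rotated]) (simp add: finite_incident)
  also have "\<dots> \<le> r"
  proof -
    have "card ?N \<le> r + 1" by (rule card_end_neighbourhood[OF assms(1)])
    then show ?thesis using h finite_incident by (simp add: card_Diff_singleton)
  qed
  finally show ?thesis .
qed

lemma labels_cases:
  assumes "l \<in> labels"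
  obtains "l = (0, 0)"
    | i sd where "i < r" "l = (Suc i, end_pos sd i)"
    | i j where "i < r" "0 < j" "Suc j < qs ! i" "l = (Suc i, j)"
proof (cases rule: labelsE[OF assms])
  case 1
  then show ?thesis using that(1) by blast
next
  case (2 i j)
  then consider "j = end_pos True i" | "j = end_pos False i" | "0 < j" "Suc j < qs ! i"
    by (cases "j = 0"; cases "Suc j = qs ! i") (auto simp: end_pos_def)
  then show ?thesis using that(2,3) 2 by cases blast+
qed

text \<open>The end edges at
  \<open>pole sd\<close> lie below those at the other pole, and the two end edges of path \<open>t\<close>, which has at
  least four edges, lie above both; so every end edge has a neighbour ranked above it, namely the
  next edge on its path or, at \<open>pole (\<not> sd)\<close>, the end edge of path \<open>t\<close>.\<close>

definition level :: "bool \<Rightarrow> label \<Rightarrow> label \<Rightarrow> nat \<Rightarrow> label \<Rightarrow> nat" where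
  "level sd a b t l = (if l = a then 0 else if l = b then 1 else if fst l = 0 then 2
     else if fst l = Suc t then (if snd l = 0 \<or> snd l = qs ! t - 1 then 5 else 6)
     else if snd l = end_pos sd (fst l - 1) then 3
     else if snd l = end_pos (\<not> sd) (fst l - 1) then 4 else 6)"

definition level_key :: "bool \<Rightarrow> label \<Rightarrow> label \<Rightarrow> nat \<Rightarrow> label \<Rightarrow> nat \<times> label" where
  "level_key sd a b t l = (level sd a b t l, l)"

lemma inj_on_level_key: "inj_on (level_key sd a b t) labels"
  by (rule inj_onI) (simp add: level_key_def)

lemma not_arc_level_less:
  "level sd a b t l < level sd a b t h \<Longrightarrow> \<not> arc (level_key sd a b t) tie l h"
  using arc_key_le[of "level_key sd a b t" tie l h] by (auto simp: level_key_def)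

lemma out_labels_level_sink: "out_labels (level_key sd a b t) no_tie a = {}"
proof -
  have "h = a" if "arc (level_key sd a b t) no_tie a h" for h
    using arc_key_le[OF that] by (auto simp: level_key_def level_def split: if_splits)
  then show ?thesis unfolding out_labels_def arc_def by blast
qed

lemma out_labels_level_second: "out_labels (level_key sd a b t) no_tie b \<subseteq> {a}"
proof
  fix h assume "h \<in> out_labels (level_key sd a b t) no_tie b"
  then have "arc (level_key sd a b t) no_tie b h" unfolding out_labels_def by simp
  then show "h \<in> {a}"
    using arc_key_le[of "level_key sd a b t" no_tie b h]
    by (auto simp: level_key_def level_def arc_def split: if_splits)
qed

lemma out_labels_level_x1x2:
  assumes "(0, 0) \<notin> {a, b}"
  shows "out_labels (level_key sd a b t) no_tie (0, 0) \<subseteq> {a, b}"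
proof
  fix h assume "h \<in> out_labels (level_key sd a b t) no_tie (0, 0)"
  then have h: "arc (level_key sd a b t) no_tie (0, 0) h" unfolding out_labels_def by simp
  then have "h \<in> labels" "h \<noteq> (0, 0)" unfolding arc_def by auto
  then have "fst h \<noteq> 0" by (cases h) (auto elim: labelsE)
  then show "h \<in> {a, b}"
    using arc_key_le[OF h] assms by (auto simp: level_key_def level_def split: if_splits)
qed

text \<open>The edges \<open>a\<close> and \<open>b\<close> must not occupy those higher neighbours.\<close>

definition admissible :: "bool \<Rightarrow> nat \<Rightarrow> label set \<Rightarrow> bool" where
  "admissible sd t B \<longleftrightarrow> (\<forall>i<r. (Suc i, end_pos sd i) \<notin> B \<longrightarrow> (Suc i, next_pos sd i) \<notin> B) \<and>
     (Suc t, end_pos (\<not> sd) t) \<notin> B \<and> (Suc t, next_pos (\<not> sd) t) \<notin> B"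

lemma card_out_labels_end_below:
  assumes "i < r"
    and "h \<in> (incident (pole sd') - {(Suc i, end_pos sd' i)}) \<union> {(Suc i, next_pos sd' i)}"
    and "level sd a b t (Suc i, end_pos sd' i) < level sd a b t h"
  shows "card (out_labels (level_key sd a b t) no_tie (Suc i, end_pos sd' i)) \<le> r"
  using card_out_labels_end_le_r[OF assms(1,2) not_arc_level_less[OF assms(3)]] .

lemma card_out_labels_level_end:
  assumes t: "t < r" "4 \<le> qs ! t" and adm: "admissible sd t {a, b}"
    and i: "i < r" and l: "(Suc i, end_pos sd' i) \<notin> {a, b}"
  shows "card (out_labels (level_key sd a b t) no_tie (Suc i, end_pos sd' i)) \<le> r"
proof -
  have next_free: "\<forall>i<r. (Suc i, end_pos sd i) \<notin> {a, b} \<longrightarrow> (Suc i, next_pos sd i) \<notin> {a, b}"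
    and t_free: "(Suc t, end_pos (\<not> sd) t) \<notin> {a, b}" "(Suc t, next_pos (\<not> sd) t) \<notin> {a, b}"
    using adm unfolding admissible_def by auto
  have end_t: "end_pos s t = 0 \<or> end_pos s t = qs ! t - 1" for s by (simp add: end_pos_def)
  have next_t: "next_pos s t \<noteq> 0 \<and> next_pos s t \<noteq> qs ! t - 1" for s
    using t(2) by (auto simp: next_pos_def)
  consider "i = t" | "i \<noteq> t" "sd' = sd" | "i \<noteq> t" "sd' = (\<not> sd)" by blast
  then show ?thesis
  proof cases
    case 1
    have "(Suc i, next_pos sd' i) \<notin> {a, b}"
      using next_free t_free l i 1 by (cases "sd' = sd") auto
    then have "level sd a b t (Suc i, end_pos sd' i) < level sd a b t (Suc i, next_pos sd' i)"
      using 1 l end_t[of sd'] next_t[of sd'] by (auto simp: level_def)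
    then show ?thesis by (rule card_out_labels_end_below[OF i, rotated]) simp
  next
    case 2
    have "(Suc i, next_pos sd i) \<notin> {a, b}" using next_free l i 2 by simp
    then have "level sd a b t (Suc i, end_pos sd' i) < level sd a b t (Suc i, next_pos sd' i)"
      using 2 l next_pos_neq_end_pos[OF i] by (auto simp: level_def)
    then show ?thesis by (rule card_out_labels_end_below[OF i, rotated]) simp
  next
    case 3
    have "level sd a b t (Suc i, end_pos sd' i) < level sd a b t (Suc t, end_pos sd' t)"
      using 3 l t_free end_t[of sd'] end_pos_neq[OF i, of sd] by (auto simp: level_def)
    then show ?thesis
      by (rule card_out_labels_end_below[OF i, rotated]) (use end_label_incident_pole[OF t(1)] 3 in simp)
  qed
qed

text \<open>At a pole all edges may have out-degree \<open>r\<close>; the labels \<open>(0, 1)\<close> and \<open>(0, 2)\<close> passed as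
  \<open>a\<close> and \<open>b\<close> are not labels, so here no edge is singled out.\<close>

lemma f_edge_orientable_at_pole:
  assumes t: "t < r" "4 \<le> qs ! t" and p: "3 \<le> p" "r + 1 \<le> p"
  shows "f_edge_orientable (theta_E qs) (f_kv (theta_E qs) p (pole sd))"
proof (rule f_edge_orientable_by_injective_key[OF inj_on_level_key[of sd "(0, 1)" "(0, 2)" t]])
  let ?key = "level_key sd (0, 1) (0, 2) t"
  fix l assume l: "l \<in> labels"
  have "card (out_labels ?key no_tie l) \<le> r \<or> card (out_labels ?key no_tie l) \<le> 2 \<and> l \<notin> incident (pole sd)"
  proof (cases rule: labels_cases[OF l])
    case 1
    have "out_labels ?key no_tie l \<subseteq> {(0, 1), (0, 2)} \<inter> labels"
      unfolding 1 by (intro Int_greatest out_labels_level_x1x2 out_labels_subset_labels) simp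
    also have "\<dots> = {}" by simp
    finally show ?thesis by simp
  next
    case (2 i sd')
    have "admissible sd t {(0, 1), (0, 2)}" unfolding admissible_def by simp
    then show ?thesis unfolding 2(2) using card_out_labels_level_end[OF t _ 2(1)] by simp
  next
    case (3 i j)
    then show ?thesis using card_out_labels_inner[of i j]
      by (auto simp: incident_def pole_def theta_pv_def)
  qed
  then show "1 + card (out_labels ?key no_tie l) \<le> f_kv (theta_E qs) p (pole sd) (edge_of l)"
    using f_kv_edge_of[OF l, of p "pole sd"] card_incident_pole[of sd] p by auto
qed

lemma f_edge_orientable_at_inner_by_levels:
  assumes v: "i0 < r" "0 < j0" "j0 < qs ! i0"
    and ab: "incident (Suc i0, j0) = {a, b}" "a \<noteq> b"
    and t: "t < r" "4 \<le> qs ! t"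
    and adm: "r = 1 \<or> admissible sd t {a, b}"
    and p: "3 \<le> p" "r + 1 \<le> p"
  shows "f_edge_orientable (theta_E qs) (f_kv (theta_E qs) p (Suc i0, j0))"
proof (rule f_edge_orientable_by_injective_key[OF inj_on_level_key[of sd a b t]])
  let ?key = "level_key sd a b t"
  have x1x2: "(0, 0) \<notin> {a, b}"
    using ab(1) incident_inner[OF v] by auto
  fix l assume l: "l \<in> labels"
  show "1 + card (out_labels ?key no_tie l) \<le> f_kv (theta_E qs) p (Suc i0, j0) (edge_of l)"
  proof (cases "l \<in> {a, b}")
    case True
    have "card (out_labels ?key no_tie l) \<le> 1"
      using True out_labels_level_sink[of sd a b t] out_labels_level_second[of sd a b t]
        card_mono[of "{a}" "out_labels ?key no_tie b"] by auto
    then show ?thesis using True ab f_kv_edge_of[OF l] by simp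
  next
    case False
    have "card (out_labels ?key no_tie l) \<le> p - 1"
    proof (cases rule: labels_cases[OF l])
      case 1
      then have "card (out_labels ?key no_tie l) \<le> card {a, b}"
        using out_labels_level_x1x2[OF x1x2] by (intro card_mono) simp_all
      also have "\<dots> \<le> 2" by (simp add: card_insert_le_m1)
      finally show ?thesis using p by simp
    next
      case (2 i sd')
      have "card (out_labels ?key no_tie l) \<le> r + 1" "admissible sd t {a, b} \<Longrightarrow> card (out_labels ?key no_tie l) \<le> r"
        using card_out_labels_end[OF 2(1)] card_out_labels_level_end[OF t _ 2(1)] False 2(2) by simp_all
      then show ?thesis using adm p by auto
    next
      case (3 i j)
      then show ?thesis using card_out_labels_inner[of i j ?key no_tie] p by simp
    qed
    then show ?thesis using False ab f_kv_edge_of[OF l] p by simp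
  qed
qed

text \<open>The cycle runs along path \<open>i0\<close> from \<open>x\<^sub>1\<close> to \<open>x\<^sub>2\<close> and back along path \<open>k\<close>;
  \<open>cycle_label\<close> numbers its edges in this order.\<close>

definition on_cycle :: "nat \<Rightarrow> nat \<Rightarrow> label \<Rightarrow> bool" where
  "on_cycle i0 k l \<longleftrightarrow> l \<in> labels \<and> (fst l = Suc i0 \<or> fst l = Suc k)"

definition cycle_succ :: "nat \<Rightarrow> nat \<Rightarrow> label \<Rightarrow> label" where
  "cycle_succ i0 k l = (if fst l = Suc i0
     then (if Suc (snd l) < qs ! i0 then (Suc i0, Suc (snd l)) else (Suc k, qs ! k - 1))
     else (if 0 < snd l then (Suc k, snd l - 1) else (Suc i0, 0)))"

definition cycle_tie :: "nat \<Rightarrow> nat \<Rightarrow> label \<Rightarrow> label \<Rightarrow> bool" where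
  "cycle_tie i0 k l l' \<longleftrightarrow> on_cycle i0 k l \<and> on_cycle i0 k l' \<and> l' = cycle_succ i0 k l"

definition cycle_key :: "nat \<Rightarrow> nat \<Rightarrow> label \<Rightarrow> nat \<times> label" where
  "cycle_key i0 k l = (if on_cycle i0 k l then (2, 0, 0) else if l = (0, 0) then (0, l) else (1, l))"

definition cycle_label :: "nat \<Rightarrow> nat \<Rightarrow> nat \<Rightarrow> label" where
  "cycle_label i0 k j = (if j < qs ! i0 then (Suc i0, j) else (Suc k, qs ! k - 1 - (j - qs ! i0)))"

lemma edge_of_subset_theta_V: "l \<in> labels \<Longrightarrow> edge_of l \<subseteq> theta_V qs"
  by (elim labelsE) (auto simp: theta_V_def theta_pv_def)

lemma on_cycle_Suc: "on_cycle i0 k (Suc i, j) \<longleftrightarrow> i < r \<and> j < qs ! i \<and> (i = i0 \<or> i = k)"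
  unfolding on_cycle_def by auto

context
  fixes i0 k
  assumes cycle_paths: "i0 < r" "k < r" "i0 \<noteq> k"
begin

lemma on_cycle_E:
  assumes "on_cycle i0 k l"
  obtains j where "l = (Suc i0, j)" "j < qs ! i0" | j where "l = (Suc k, j)" "j < qs ! k"
  using assms unfolding on_cycle_def by (cases l) (auto elim: labelsE)

lemma on_cycle_succ: "on_cycle i0 k l \<Longrightarrow> on_cycle i0 k (cycle_succ i0 k l)"
  using cycle_paths path_length_ge_2[of i0] path_length_ge_2[of k]
  by (elim on_cycle_E) (auto simp: cycle_succ_def on_cycle_Suc)

lemma adjacent_succ: "on_cycle i0 k l \<Longrightarrow> edge_of l \<inter> edge_of (cycle_succ i0 k l) \<noteq> {}"
  using cycle_paths path_length_ge_2[of i0] path_length_ge_2[of k]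
  by (elim on_cycle_E) (auto simp: cycle_succ_def theta_pv_def)

lemma adjacent_on_cycle:
  assumes l: "on_cycle i0 k l" and l': "on_cycle i0 k l'" and "l \<noteq> l'"
    and z: "z \<in> edge_of l" "z \<in> edge_of l'"
  shows "l' = cycle_succ i0 k l \<or> l = cycle_succ i0 k l'"
proof -
  have inc: "l \<in> incident z" "l' \<in> incident z" using l l' z unfolding incident_def on_cycle_def by auto
  have "z \<in> theta_V qs" using l z(1) edge_of_subset_theta_V unfolding on_cycle_def by blast
  then show ?thesis
  proof (cases rule: theta_V_cases)
    case (1 sd)
    then have "l \<in> {(Suc i0, end_pos sd i0), (Suc k, end_pos sd k)}"
      "l' \<in> {(Suc i0, end_pos sd i0), (Suc k, end_pos sd k)}"
      using inc l l' unfolding 1 incident_pole by (auto simp: on_cycle_def)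
    then have "l = (Suc i0, end_pos sd i0) \<and> l' = (Suc k, end_pos sd k) \<or>
        l = (Suc k, end_pos sd k) \<and> l' = (Suc i0, end_pos sd i0)"
      using \<open>l \<noteq> l'\<close> by blast
    moreover have "cycle_succ i0 k (Suc k, end_pos True k) = (Suc i0, end_pos True i0)"
      "cycle_succ i0 k (Suc i0, end_pos False i0) = (Suc k, end_pos False k)"
      using cycle_paths path_length_ge_2[of i0] by (auto simp: cycle_succ_def end_pos_def)
    ultimately show ?thesis by (cases sd) auto
  next
    case (2 i m)
    then have ll': "l \<in> {(Suc i, m - 1), (Suc i, m)}" "l' \<in> {(Suc i, m - 1), (Suc i, m)}"
      using inc incident_inner[of i m] by simp_all
    then have "i = i0 \<or> i = k" using l unfolding on_cycle_def by auto
    moreover have "l = (Suc i, m - 1) \<and> l' = (Suc i, m) \<or> l = (Suc i, m) \<and> l' = (Suc i, m - 1)"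
      using ll' \<open>l \<noteq> l'\<close> by blast
    moreover have "cycle_succ i0 k (Suc i0, m - 1) = (Suc i0, m)" if "i = i0"
      using that 2 by (simp add: cycle_succ_def)
    moreover have "cycle_succ i0 k (Suc k, m) = (Suc k, m - 1)"
      using 2 cycle_paths by (simp add: cycle_succ_def)
    ultimately show ?thesis by auto
  qed
qed

lemma cycle_ties:
  assumes "l \<in> labels" "l' \<in> labels" "l \<noteq> l'" "edge_of l \<inter> edge_of l' \<noteq> {}"
    and "cycle_key i0 k l = cycle_key i0 k l'"
  shows "cycle_tie i0 k l l' \<or> cycle_tie i0 k l' l"
proof -
  have "on_cycle i0 k l" "on_cycle i0 k l'"
    using assms(3,5) unfolding cycle_key_def by (auto split: if_splits)
  then show ?thesis using adjacent_on_cycle assms(3,4) unfolding cycle_tie_def by blast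
qed

abbreviation "cycle_length \<equiv> qs ! i0 + qs ! k"

lemma bij_betw_cycle_label: "bij_betw (cycle_label i0 k) {..<cycle_length} {l. on_cycle i0 k l}"
proof (rule bij_betw_imageI)
  show "inj_on (cycle_label i0 k) {..<cycle_length}"
    unfolding inj_on_def cycle_label_def using cycle_paths by (auto split: if_splits)
  show "cycle_label i0 k ` {..<cycle_length} = {l. on_cycle i0 k l}"
  proof (intro equalityI subsetI)
    fix l assume "l \<in> {l. on_cycle i0 k l}"
    then have "on_cycle i0 k l" by simp
    then show "l \<in> cycle_label i0 k ` {..<cycle_length}"
    proof (cases rule: on_cycle_E)
      case (1 j)
      then show ?thesis by (intro image_eqI[of _ _ j]) (auto simp: cycle_label_def)
    next
      case (2 j)
      then show ?thesis
        by (intro image_eqI[of _ _ "qs ! i0 + (qs ! k - 1 - j)"]) (auto simp: cycle_label_def)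
    qed
  qed (use cycle_paths in \<open>auto simp: cycle_label_def on_cycle_Suc\<close>)
qed

lemma cycle_succ_cycle_label:
  assumes "j < cycle_length"
  shows "cycle_succ i0 k (cycle_label i0 k j) = cycle_label i0 k (Suc j mod cycle_length)"
proof -
  have "Suc j mod cycle_length = (if Suc j = cycle_length then 0 else Suc j)" using assms by simp
  then show ?thesis
    using assms cycle_paths path_length_ge_2[of i0] path_length_ge_2[of k]
    unfolding cycle_succ_def cycle_label_def by auto
qed

lemma cycle_levels:
  assumes "U \<subseteq> labels" and same: "\<And>u u'. u \<in> U \<Longrightarrow> u' \<in> U \<Longrightarrow> cycle_key i0 k u = cycle_key i0 k u'"
  shows "\<exists>S. is_kernel U (label_arcs (cycle_key i0 k) (cycle_tie i0 k)) S"
proof (cases "\<forall>u\<in>U. on_cycle i0 k u")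
  case True
  let ?c = "cycle_label i0 k" and ?n = cycle_length
  have bij: "bij_betw ?c {..<?n} {l. on_cycle i0 k l}" by (rule bij_betw_cycle_label)
  have "(?c i, ?c j) \<in> label_arcs (cycle_key i0 k) (cycle_tie i0 k) \<longleftrightarrow> j = Suc i mod ?n"
    if "i < ?n" "j < ?n" for i j
  proof -
    have on: "on_cycle i0 k (?c i)" "on_cycle i0 k (?c j)"
      using that bij bij_betwE by fastforce+
    have inj: "inj_on ?c {..<?n}" using bij by (simp add: bij_betw_def)
    have succ: "Suc i mod ?n < ?n" "Suc i mod ?n \<noteq> i"
      using that cycle_paths path_length_ge_2[of i0] by (simp_all add: mod_Suc)
    then have "?c (Suc i mod ?n) \<noteq> ?c i" using that by (simp add: inj_on_eq_iff[OF inj])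
    then have "(?c i, ?c j) \<in> label_arcs (cycle_key i0 k) (cycle_tie i0 k) \<longleftrightarrow> ?c j = ?c (Suc i mod ?n)"
      using on adjacent_succ[OF on(1)] on_cycle_succ[OF on(1)] cycle_succ_cycle_label[OF that(1)]
      unfolding label_arcs_def arc_def cycle_tie_def cycle_key_def on_cycle_def by auto
    also have "\<dots> \<longleftrightarrow> j = Suc i mod ?n" using that succ by (simp add: inj_on_eq_iff[OF inj])
    finally show ?thesis .
  qed
  moreover have "even ?n" using even_path_length cycle_paths by simp
  moreover have "U \<subseteq> ?c ` {..<?n}" using True bij by (auto simp: bij_betw_def)
  ultimately show ?thesis using even_cycle_kernel bij by (metis bij_betw_def)
next
  case False
  then obtain u where u: "u \<in> U" "\<not> on_cycle i0 k u" by blast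
  have "u' = u" if "u' \<in> U" for u'
    using same[OF that u(1)] u(2) unfolding cycle_key_def by (auto split: if_splits)
  then have "U = {u}" using u(1) by blast
  moreover have "is_kernel {u} (label_arcs (cycle_key i0 k) (cycle_tie i0 k)) {u}"
    unfolding is_kernel_def label_arcs_def arc_def by simp
  ultimately show ?thesis by blast
qed

abbreviation "cycle_arc \<equiv> arc (cycle_key i0 k) (cycle_tie i0 k)"
abbreviation "cycle_out \<equiv> out_labels (cycle_key i0 k) (cycle_tie i0 k)"

lemma cycle_arc_succ: "cycle_arc l h \<Longrightarrow> on_cycle i0 k l \<Longrightarrow> on_cycle i0 k h \<Longrightarrow> h = cycle_succ i0 k l"
  unfolding arc_def cycle_key_def cycle_tie_def by simp

lemma not_cycle_arc_into_cycle: "\<not> on_cycle i0 k l \<Longrightarrow> on_cycle i0 k h \<Longrightarrow> \<not> cycle_arc l h"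
  unfolding arc_def cycle_key_def by auto

lemma cycle_out_x1x2: "cycle_out (0, 0) = {}"
proof -
  have "\<not> on_cycle i0 k (0, 0)" by (simp add: on_cycle_def)
  then have "\<not> cycle_arc (0, 0) h" for h
    unfolding arc_def cycle_key_def cycle_tie_def by (auto split: if_splits)
  then show ?thesis unfolding out_labels_def by blast
qed

lemma card_cycle_out_inner:
  assumes "i = i0 \<or> i = k" "0 < j" "Suc j < qs ! i"
  shows "card (cycle_out (Suc i, j)) \<le> 1"
proof -
  have i: "i < r" using assms(1) cycle_paths by auto
  have "(\<Union>z\<in>edge_of (Suc i, j). incident z) = {(Suc i, j - 1), (Suc i, j), (Suc i, Suc j)}"
    using assms i incident_inner[of i j] incident_inner[of i "Suc j"] by (auto simp: pv_inner)
  then have "cycle_out (Suc i, j) \<subseteq> {(Suc i, j - 1), (Suc i, Suc j)}"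
    using out_labels_subset_adjacent[of "(Suc i, j)"] assms i by auto
  moreover have "on_cycle i0 k (Suc i, j)" "on_cycle i0 k (Suc i, j - 1)" "on_cycle i0 k (Suc i, Suc j)"
    using assms i by (auto simp: on_cycle_Suc)
  ultimately have "cycle_out (Suc i, j) \<subseteq> {cycle_succ i0 k (Suc i, j)}"
    using cycle_arc_succ unfolding out_labels_def by blast
  then show ?thesis using card_mono[of "{cycle_succ i0 k (Suc i, j)}"] by fastforce
qed

lemma card_cycle_out_end:
  assumes i: "i < r"
  shows "card (cycle_out (Suc i, end_pos sd i)) \<le> r"
proof (cases "i = i0 \<or> i = k")
  case False
  have "(Suc i0, end_pos sd i0) \<in> incident (pole sd) - {(Suc i, end_pos sd i)}"
    using end_label_incident_pole cycle_paths False by simp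
  moreover have "\<not> cycle_arc (Suc i, end_pos sd i) (Suc i0, end_pos sd i0)"
    using False i cycle_paths end_pos_less by (intro not_cycle_arc_into_cycle) (auto simp: on_cycle_Suc)
  ultimately show ?thesis by (intro card_out_labels_end_le_r[OF i]) simp_all
next
  case True
  define i' where "i' = (if i = i0 then k else i0)"
  have i': "i' < r" "i' \<noteq> i" "i' = i0 \<or> i' = k" using True cycle_paths unfolding i'_def by auto
  let ?l = "(Suc i, end_pos sd i)" and ?h = "(Suc i', end_pos sd i')" and ?n = "(Suc i, next_pos sd i)"
  have on: "on_cycle i0 k ?l" "on_cycle i0 k ?h" "on_cycle i0 k ?n"
    using True i i' end_pos_less next_pos_less by (auto simp: on_cycle_Suc)
  have "\<not> cycle_arc ?l ?h \<or> \<not> cycle_arc ?l ?n"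
  proof (rule ccontr)
    assume "\<not> (\<not> cycle_arc ?l ?h \<or> \<not> cycle_arc ?l ?n)"
    then have "?h = cycle_succ i0 k ?l" "?n = cycle_succ i0 k ?l"
      using cycle_arc_succ[OF _ on(1)] on(2,3) by auto
    then show False using i'(2) by (metis prod.inject old.nat.inject)
  qed
  moreover have "?h \<in> incident (pole sd) - {?l}" using end_label_incident_pole i' by simp
  ultimately show ?thesis by (auto intro: card_out_labels_end_le_r[OF i])
qed

lemma f_edge_orientable_at_inner_by_cycle:
  assumes j0: "2 \<le> j0" "j0 + 2 \<le> qs ! i0" and p: "3 \<le> p" "r + 1 \<le> p"
  shows "f_edge_orientable (theta_E qs) (f_kv (theta_E qs) p (Suc i0, j0))"
proof (rule f_edge_orientable_by_key[OF cycle_ties cycle_levels])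
  fix l assume l: "l \<in> labels"
  have incident_v: "incident (Suc i0, j0) = {(Suc i0, j0 - 1), (Suc i0, j0)}"
    using incident_inner[of i0 j0] cycle_paths j0 by simp
  show "1 + card (cycle_out l) \<le> f_kv (theta_E qs) p (Suc i0, j0) (edge_of l)"
  proof (cases "l \<in> incident (Suc i0, j0)")
    case True
    then have "card (cycle_out l) \<le> 1"
      using card_cycle_out_inner[of i0 "j0 - 1"] card_cycle_out_inner[of i0 j0] j0 incident_v by auto
    then show ?thesis using True f_kv_edge_of[OF l] incident_v j0 by simp
  next
    case False
    have "card (cycle_out l) \<le> p - 1"
    proof (cases rule: labels_cases[OF l])
      case 1
      then show ?thesis using cycle_out_x1x2 by simp
    next
      case (2 i sd)
      then show ?thesis using card_cycle_out_end[of i sd] p by simp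
    next
      case (3 i j)
      then show ?thesis using card_out_labels_inner[of i j "cycle_key i0 k" "cycle_tie i0 k"] p by simp
    qed
    then show ?thesis using False f_kv_edge_of[OF l] p by simp
  qed
qed

end

lemma f_edge_orientable_at_inner:
  assumes v: "i0 < r" "0 < j0" "j0 < qs ! i0" and t: "t < r" "4 \<le> qs ! t"
    and p: "3 \<le> p" "r + 1 \<le> p"
  shows "f_edge_orientable (theta_E qs) (f_kv (theta_E qs) p (Suc i0, j0))"
proof -
  let ?B = "{(Suc i0, j0 - 1), (Suc i0, j0)}"
  have by_levels: "f_edge_orientable (theta_E qs) (f_kv (theta_E qs) p (Suc i0, j0))"
    if "r = 1 \<or> admissible sd t ?B" for sd
    using f_edge_orientable_at_inner_by_levels[OF v incident_inner[OF v] _ t that p] v by simp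
  have q: "2 \<le> qs ! i0" "even (qs ! i0)" using v path_length_ge_2 even_path_length by auto
  consider "j0 = 1" | "j0 = qs ! i0 - 1" "j0 \<noteq> 1" | "r = 1" | "2 \<le> j0" "j0 + 2 \<le> qs ! i0" "r \<noteq> 1"
    using v q by (cases "j0 = 1 \<or> j0 = qs ! i0 - 1"; cases "r = 1") auto
  then show ?thesis
  proof cases
    case 1
    have "admissible True t ?B"
      using 1 t unfolding admissible_def by (auto simp: end_pos_def next_pos_def)
    then show ?thesis using by_levels by blast
  next
    case 2
    then have "4 \<le> qs ! i0" using q by (auto elim!: evenE)
    then have "admissible False t ?B"
      using 2 t unfolding admissible_def by (auto simp: end_pos_def next_pos_def)
    then show ?thesis using by_levels by blast
  next
    case 3
    then show ?thesis using by_levels by blast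
  next
    case 4
    define k :: nat where "k = (if i0 = 0 then 1 else 0)"
    have "k < r" "i0 \<noteq> k" using 4(3) r_pos v(1) unfolding k_def by auto
    then show ?thesis using f_edge_orientable_at_inner_by_cycle[OF v(1) _ _ 4(1,2) p] by blast
  qed
qed

lemma succ_r_le_max_degree: "r + 1 \<le> max_degree (theta_V qs) (theta_E qs)"
proof -
  have "(0, 0) \<in> theta_V qs" unfolding theta_V_def by simp
  then have "degree (theta_E qs) (0, 0) \<le> max_degree (theta_V qs) (theta_E qs)"
    unfolding max_degree_def using finite_theta_V by simp
  then show ?thesis using card_incident_pole[of True] degree_theta_E by (simp add: pole_def)
qed

end

theorem mainTheorem18:
  fixes qs :: "nat list" and p :: nat
  assumes "length qs \<ge> 1"
    and "\<forall>q \<in> set qs. q > 0 \<and> even q"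
    and "Max (set qs) > 2"
    and "p \<ge> 3" and "p \<ge> max_degree (theta_V qs) (theta_E qs)"
  shows "strongly_edge_orientable (theta_V qs) (theta_E qs) p"
proof -
  interpret theta_graph qs using assms(1,2) by unfold_locales auto
  obtain t where t: "t < length qs" "qs ! t = Max (set qs)"
    using Max_in[of "set qs"] qs_nonempty by (metis finite_set in_set_conv_nth set_empty)
  then have "4 \<le> qs ! t" using assms(3) even_path_length[of t] by (auto elim!: evenE)
  have "length qs + 1 \<le> p" using succ_r_le_max_degree assms(5) by simp
  show ?thesis
    unfolding strongly_edge_orientable_def
  proof
    fix v assume "v \<in> theta_V qs"
    then show "f_edge_orientable (theta_E qs) (f_kv (theta_E qs) p v)"
      using f_edge_orientable_at_pole f_edge_orientable_at_inner t(1) \<open>4 \<le> qs ! t\<close> assms(4)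
        \<open>length qs + 1 \<le> p\<close>
      by (cases rule: theta_V_cases) auto
  qed
qed

end
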